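(* Let $\mathcal{JS}=(\mathcal F,\mathcal F_d,R,\mathcal B)$ be a justification system. For every locally complete graph-like (respectively tree-like) justification $J$ and every internal node $n$ of $J$ with label $x=\ell(n)\in\mathcal F_d$, there exists a connected, locally complete graph-like (respectively tree-like) justification $J'$ with a node $n'$ labelled $x$ from which every node of $J'$ is reachable (so $x$ is a root of $J'$), such that $\mathrm{val}(J,n,\mathcal I)\le_t \mathrm{val}(J',n',\mathcal I)$ for all interpretations $\mathcal I$.
   Context: Let $\mathcal F$ be a set (the fact space) containing $\mathcal L=\{\mathbf t,\mathbf f,\mathbf u\}$, equipped with an involution $\sim:\mathcal F\to\mathcal F$ with $\sim\mathbf t=\mathbf f$, $\sim\mathbf u=\mathbf u$ and $\sim x\neq x$ for all $x\neq\mathbf u$; for $A\subseteq\mathcal F$ put $\sim A=\{\sim a:a\in A\}$. On $\mathcal L$ the truth order is $\mathbf f<_t\mathbf u<_t\mathbf t$; $\bigwedge$ and $\bigvee$ denote greatest lower and least upper bounds in $(\mathcal L,\le_t)$ (so $\bigvee\emptyset=\mathbf f$, $\bigwedge\emptyset=\mathbf t$); $\sim$ reverses $\le_t$ on $\mathcal L$. A justification frame is $\mathcal{JF}=(\mathcal F,\mathcal F_d,R)$ where $\mathcal F_d\subseteq\mathcal F$ (defined facts) satisfies $\sim\mathcal F_d=\mathcal F_d$ and $\mathcal F_d\cap\mathcal L=\emptyset$, and $R\subseteq\mathcal F_d\times 2^{\mathcal F}$ is a set of rules, written $x\gets A$, such that no rule has empty body and every $x\in\mathcal F_d$ is the head of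 at least one rule. $\mathcal F_o=\mathcal F\setminus\mathcal F_d$ are the open facts. A justification in $\mathcal{JF}$ is a directed graph $(N,E)$ with a labelling $\ell:N\to\mathcal F$ such that every internal node $n$ (node with at least one outgoing edge) satisfies $\ell(n)\in\mathcal F_d$ and $\ell(n)\gets\{\ell(m):(n,m)\in E\}\in R$; nodes without outgoing edges are leaves. It is graph-like if $\ell$ is injective, and tree-like if its underlying undirected graph is acyclic. It is locally complete if no leaf is labelled by a defined fact, connected if its underlying undirected graph is connected, and $x$ is a root of it if some node $n$ with $\ell(n)=x$ reaches every node. A $\mathcal{JF}$-branch is either an infinite sequence $x_0\to x_1\to\cdots$ of defined facts or a finite sequence $x_0\to\cdots\to x_k$ ($k\ge1$) with $x_0,\dots,x_{k-1}\in\mathcal F_d$ and $x_k\in\mathcal F_o$. For a node $n$ of a locally complete justification $J$, $B_J(n)$ is the set of label sequences of maximal paths of $J$ starting at $n$ (infinite, or ending in a leaf). A branch evaluation $\mathcal B$ assigns to each $\mathcal{JF}$-branch an element of $\mathcal F$. A justification system is $\mathcal{JS}=(\mathcal F,\mathcal F_d,R,\mathcal B)$. An interpretation is a map $\mathcal I:\mathcal F\to\mathcal L$ with $\mathcal I(\sim x)=\sim\mathcal I(x)$ for all $x$ and $\mathcal I(l)=l$ for $l\in\mathcal L$. The value of a node $n$ of a locally complete justification $J$ is $\mathrm{val}(J,n,\mathcal I)=\bigwedge_{b\in B_J(n)}\mathcal I(\mathcal B(b))$. *)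

theory Defs
  imports Main
begin

datatype tv = FF | UU | TT

fun tv_rank :: "tv \<Rightarrow> nat" where
  "tv_rank FF = 0" | "tv_rank UU = 1" | "tv_rank TT = 2"

definition le_t :: "tv \<Rightarrow> tv \<Rightarrow> bool" where
  "le_t a b \<longleftrightarrow> tv_rank a \<le> tv_rank b"

fun neg_tv :: "tv \<Rightarrow> tv" where
  "neg_tv TT = FF" | "neg_tv FF = TT" | "neg_tv UU = UU"

definition glb_t :: "tv set \<Rightarrow> tv" where
  "glb_t S = (if FF \<in> S then FF else if UU \<in> S then UU else TT)"

text \<open>The fact space is the universe of the type 'f; tt, ff, uu are the three
  logical facts (t, f, u); neg is the involution \<sim>; Fd the defined facts;
  R the rules (head, body).\<close>
definition jframe ::
  "('f \<Rightarrow> 'f) \<Rightarrow> 'f \<Rightarrow> 'f \<Rightarrow> 'f \<Rightarrow> 'f set \<Rightarrow> ('f \<times> 'f set) set \<Rightarrow> bool" where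
  "jframe neg tt ff uu Fd R \<longleftrightarrow>
     (\<forall>x. neg (neg x) = x) \<and> neg tt = ff \<and> neg uu = uu \<and>
     (\<forall>x. x \<noteq> uu \<longrightarrow> neg x \<noteq> x) \<and>
     neg ` Fd = Fd \<and> Fd \<inter> {tt, ff, uu} = {} \<and>
     (\<forall>x A. (x, A) \<in> R \<longrightarrow> x \<in> Fd \<and> A \<noteq> {}) \<and>
     (\<forall>x\<in>Fd. \<exists>A. (x, A) \<in> R)"

definition internal :: "('n \<times> 'n) set \<Rightarrow> 'n \<Rightarrow> bool" where
  "internal E n \<longleftrightarrow> (\<exists>m. (n, m) \<in> E)"

definition is_justification ::
  "'f set \<Rightarrow> ('f \<times> 'f set) set \<Rightarrow> 'n set \<Rightarrow> ('n \<times> 'n) set \<Rightarrow> ('n \<Rightarrow> 'f) \<Rightarrow> bool" where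
  "is_justification Fd R N E lab \<longleftrightarrow>
     E \<subseteq> N \<times> N \<and>
     (\<forall>n\<in>N. internal E n \<longrightarrow>
        lab n \<in> Fd \<and> (lab n, {lab m | m. (n, m) \<in> E}) \<in> R)"

definition graph_like :: "'n set \<Rightarrow> ('n \<Rightarrow> 'f) \<Rightarrow> bool" where
  "graph_like N lab \<longleftrightarrow> inj_on lab N"

definition uadj :: "('n \<times> 'n) set \<Rightarrow> 'n \<Rightarrow> 'n \<Rightarrow> bool" where
  "uadj E a b \<longleftrightarrow> (a, b) \<in> E \<or> (b, a) \<in> E"

text \<open>The underlying undirected (multi)graph is acyclic: no self loops, no
  pair of antiparallel edges (a cycle of length 2), and no cycle through
  k \<ge> 3 distinct nodes.\<close>
definition tree_like :: "'n set \<Rightarrow> ('n \<times> 'n) set \<Rightarrow> bool" where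
  "tree_like N E \<longleftrightarrow>
     (\<forall>a. (a, a) \<notin> E) \<and>
     (\<forall>a b. (a, b) \<in> E \<longrightarrow> (b, a) \<notin> E) \<and>
     \<not> (\<exists>vs. 3 \<le> length vs \<and> distinct vs \<and> set vs \<subseteq> N \<and>
            (\<forall>i < length vs. uadj E (vs ! i) (vs ! ((i + 1) mod length vs))))"

definition locally_complete ::
  "'f set \<Rightarrow> 'n set \<Rightarrow> ('n \<times> 'n) set \<Rightarrow> ('n \<Rightarrow> 'f) \<Rightarrow> bool" where
  "locally_complete Fd N E lab \<longleftrightarrow> (\<forall>n\<in>N. \<not> internal E n \<longrightarrow> lab n \<notin> Fd)"

definition connected_just :: "'n set \<Rightarrow> ('n \<times> 'n) set \<Rightarrow> bool" where
  "connected_just N E \<longleftrightarrow> (\<forall>a\<in>N. \<forall>b\<in>N. (a, b) \<in> (E \<union> E\<inverse>)\<^sup>*)"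

definition is_root_node :: "'n set \<Rightarrow> ('n \<times> 'n) set \<Rightarrow> 'n \<Rightarrow> bool" where
  "is_root_node N E n \<longleftrightarrow> n \<in> N \<and> (\<forall>m\<in>N. (n, m) \<in> E\<^sup>*)"

datatype 'f branch = FinBr "'f list" | InfBr "nat \<Rightarrow> 'f"

definition branches_from ::
  "('n \<times> 'n) set \<Rightarrow> ('n \<Rightarrow> 'f) \<Rightarrow> 'n \<Rightarrow> 'f branch set" where
  "branches_from E lab n =
     {FinBr (map lab ns) | ns. ns \<noteq> [] \<and> hd ns = n \<and>
        (\<forall>i. Suc i < length ns \<longrightarrow> (ns ! i, ns ! Suc i) \<in> E) \<and>
        \<not> internal E (last ns)}
     \<union> {InfBr (lab \<circ> p) | p. p 0 = n \<and> (\<forall>i. (p i, p (Suc i)) \<in> E)}"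

definition is_interp ::
  "('f \<Rightarrow> 'f) \<Rightarrow> 'f \<Rightarrow> 'f \<Rightarrow> 'f \<Rightarrow> ('f \<Rightarrow> tv) \<Rightarrow> bool" where
  "is_interp neg tt ff uu I \<longleftrightarrow>
     (\<forall>x. I (neg x) = neg_tv (I x)) \<and> I tt = TT \<and> I ff = FF \<and> I uu = UU"

text \<open>val(J, n, I) = glb of I(B(b)) over b in B_J(n); Bev is the branch evaluation.\<close>
definition val ::
  "('f branch \<Rightarrow> 'f) \<Rightarrow> ('n \<times> 'n) set \<Rightarrow> ('n \<Rightarrow> 'f) \<Rightarrow> 'n \<Rightarrow> ('f \<Rightarrow> tv) \<Rightarrow> tv" where
  "val Bev E lab n I = glb_t ((\<lambda>b. I (Bev b)) ` branches_from E lab n)"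

end

theory Submission
  imports Defs
begin

text \<open>Restrict J to the nodes reachable from n, keeping all edges leaving them. Every internal
  node keeps all its children, so this is again a (locally complete) justification with root n;
  being graph-like or tree-like passes to subgraphs; and a maximal path from n never leaves the
  reachable part, so B_J(n), and hence the value of n, is unchanged.\<close>

definition reachable_edges :: "('n \<times> 'n) set \<Rightarrow> 'n \<Rightarrow> ('n \<times> 'n) set" where
  "reachable_edges E n = {(a, b) \<in> E. (n, a) \<in> E\<^sup>*}"

lemma reachable_edges_subset: "reachable_edges E n \<subseteq> E"
  by (auto simp: reachable_edges_def)

lemma reachable_edges_iff:
  "(n, a) \<in> E\<^sup>* \<Longrightarrow> (a, b) \<in> reachable_edges E n \<longleftrightarrow> (a, b) \<in> E"
  by (simp add: reachable_edges_def)

lemma internal_reachable_edges_iff: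
  "(n, a) \<in> E\<^sup>* \<Longrightarrow> internal (reachable_edges E n) a \<longleftrightarrow> internal E a"
  by (simp add: internal_def reachable_edges_iff)

lemma rtrancl_reachable_edges_iff:
  "(n, m) \<in> (reachable_edges E n)\<^sup>* \<longleftrightarrow> (n, m) \<in> E\<^sup>*"
proof
  show "(n, m) \<in> (reachable_edges E n)\<^sup>* \<Longrightarrow> (n, m) \<in> E\<^sup>*"
    by (rule subsetD[OF rtrancl_mono[OF reachable_edges_subset]])
  show "(n, m) \<in> (reachable_edges E n)\<^sup>*" if "(n, m) \<in> E\<^sup>*"
    using that
  proof (induction rule: rtrancl_induct)
    case base
    show ?case by simp
  next
    case (step y z)
    then have "(y, z) \<in> reachable_edges E n" by (simp add: reachable_edges_iff)
    with step.IH show ?case by (rule rtrancl_into_rtrancl)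
  qed
qed

lemma path_nodes_in_rtrancl:
  assumes "ns \<noteq> []" "hd ns = n" "\<forall>i. Suc i < length ns \<longrightarrow> (ns ! i, ns ! Suc i) \<in> E"
    and "i < length ns"
  shows "(n, ns ! i) \<in> E\<^sup>*"
  using assms(4)
proof (induction i)
  case 0
  then show ?case using assms(1,2) by (simp add: hd_conv_nth)
next
  case (Suc i)
  then show ?case using assms(3) by (meson Suc_lessD rtrancl_into_rtrancl)
qed

lemma chain_nodes_in_rtrancl:
  assumes "p 0 = n" "\<forall>i. (p i, p (Suc i)) \<in> E"
  shows "(n, p i) \<in> E\<^sup>*"
proof (induction i)
  case 0
  then show ?case using assms(1) by simp
next
  case (Suc i)
  then show ?case using assms(2) by (meson rtrancl_into_rtrancl)
qed

lemma path_in_reachable_edges_iff: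
  assumes "ns \<noteq> []" "hd ns = n"
  shows "(\<forall>i. Suc i < length ns \<longrightarrow> (ns ! i, ns ! Suc i) \<in> reachable_edges E n)
     \<longleftrightarrow> (\<forall>i. Suc i < length ns \<longrightarrow> (ns ! i, ns ! Suc i) \<in> E)"
proof (intro iffI allI impI)
  fix i assume "\<forall>i. Suc i < length ns \<longrightarrow> (ns ! i, ns ! Suc i) \<in> E" "Suc i < length ns"
  moreover from this have "(n, ns ! i) \<in> E\<^sup>*"
    using path_nodes_in_rtrancl[OF assms] by simp
  ultimately show "(ns ! i, ns ! Suc i) \<in> reachable_edges E n"
    by (simp add: reachable_edges_iff)
qed (simp add: reachable_edges_def)

lemma branches_from_reachable_edges:
  "branches_from (reachable_edges E n) lab n = branches_from E lab n"
proof -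
  let ?E' = "reachable_edges E n"
  have finite_paths:
    "(\<forall>i. Suc i < length ns \<longrightarrow> (ns ! i, ns ! Suc i) \<in> ?E') \<and> \<not> internal ?E' (last ns)
     \<longleftrightarrow> (\<forall>i. Suc i < length ns \<longrightarrow> (ns ! i, ns ! Suc i) \<in> E) \<and> \<not> internal E (last ns)"
    if "ns \<noteq> []" "hd ns = n" for ns
  proof -
    have "internal ?E' (last ns) \<longleftrightarrow> internal E (last ns)"
      if "\<forall>i. Suc i < length ns \<longrightarrow> (ns ! i, ns ! Suc i) \<in> E"
    proof (rule internal_reachable_edges_iff)
      show "(n, last ns) \<in> E\<^sup>*"
        using path_nodes_in_rtrancl[OF \<open>ns \<noteq> []\<close> \<open>hd ns = n\<close> that, where i = "length ns - 1"]
          \<open>ns \<noteq> []\<close>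
        by (simp add: last_conv_nth)
    qed
    then show ?thesis
      unfolding path_in_reachable_edges_iff[OF that] by metis
  qed
  have infinite_paths:
    "(\<forall>i. (p i, p (Suc i)) \<in> ?E') \<longleftrightarrow> (\<forall>i. (p i, p (Suc i)) \<in> E)" if "p 0 = n" for p
  proof (intro iffI allI)
    fix i assume "\<forall>i. (p i, p (Suc i)) \<in> E"
    then show "(p i, p (Suc i)) \<in> ?E'"
      using chain_nodes_in_rtrancl[where p = p, OF that] by (simp add: reachable_edges_iff)
  qed (simp add: reachable_edges_def)
  show ?thesis
    unfolding branches_from_def
  proof (intro arg_cong2[where f = "(\<union>)"] Collect_cong ex_cong1)
    show "(x = FinBr (map lab ns) \<and> ns \<noteq> [] \<and> hd ns = n \<and>
            (\<forall>i. Suc i < length ns \<longrightarrow> (ns ! i, ns ! Suc i) \<in> ?E') \<and> \<not> internal ?E' (last ns))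
      \<longleftrightarrow> (x = FinBr (map lab ns) \<and> ns \<noteq> [] \<and> hd ns = n \<and>
            (\<forall>i. Suc i < length ns \<longrightarrow> (ns ! i, ns ! Suc i) \<in> E) \<and> \<not> internal E (last ns))"
      for x ns
      using finite_paths[of ns] by blast
    show "(x = InfBr (lab \<circ> p) \<and> p 0 = n \<and> (\<forall>i. (p i, p (Suc i)) \<in> ?E'))
      \<longleftrightarrow> (x = InfBr (lab \<circ> p) \<and> p 0 = n \<and> (\<forall>i. (p i, p (Suc i)) \<in> E))" for x p
      using infinite_paths[of p] by blast
  qed
qed

lemma is_justification_reachable_edges:
  assumes "is_justification Fd R N E lab"
  shows "is_justification Fd R (E\<^sup>* `` {n}) (reachable_edges E n) lab"
proof -
  have "reachable_edges E n \<subseteq> E\<^sup>* `` {n} \<times> E\<^sup>* `` {n}"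
    unfolding reachable_edges_def by (blast intro: rtrancl_into_rtrancl)
  moreover have "lab m \<in> Fd \<and> (lab m, {lab k | k. (m, k) \<in> reachable_edges E n}) \<in> R"
    if "m \<in> E\<^sup>* `` {n}" "internal (reachable_edges E n) m" for m
  proof -
    have "(n, m) \<in> E\<^sup>*" "internal E m"
      using that internal_reachable_edges_iff by fastforce+
    moreover have "m \<in> N"
      using \<open>internal E m\<close> assms unfolding is_justification_def internal_def by blast
    ultimately show ?thesis
      using assms unfolding is_justification_def by (simp add: reachable_edges_iff)
  qed
  ultimately show ?thesis
    unfolding is_justification_def by blast
qed

lemma rtrancl_closed_in_nodes:
  assumes "E \<subseteq> N \<times> N" "n \<in> N"
  shows "E\<^sup>* `` {n} \<subseteq> N"
proof
  fix m assume "m \<in> E\<^sup>* `` {n}"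
  then have "(n, m) \<in> E\<^sup>*" by simp
  then show "m \<in> N" by (induction rule: rtrancl_induct) (use assms in auto)
qed

lemma locally_complete_reachable_edges:
  assumes "locally_complete Fd N E lab" "E\<^sup>* `` {n} \<subseteq> N"
  shows "locally_complete Fd (E\<^sup>* `` {n}) (reachable_edges E n) lab"
  unfolding locally_complete_def
proof (intro ballI impI)
  fix m assume m: "m \<in> E\<^sup>* `` {n}" "\<not> internal (reachable_edges E n) m"
  then have "\<not> internal E m"
    using internal_reachable_edges_iff[of n m E] by simp
  moreover have "m \<in> N" using assms(2) m(1) by (rule subsetD)
  ultimately show "lab m \<notin> Fd"
    using assms(1) unfolding locally_complete_def by simp
qed

lemma is_root_node_reachable_edges:
  "is_root_node (E\<^sup>* `` {n}) (reachable_edges E n) n"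
  by (simp add: is_root_node_def rtrancl_reachable_edges_iff)

lemma connected_just_if_root_node:
  assumes "is_root_node N E r"
  shows "connected_just N E"
  unfolding connected_just_def
proof (intro ballI)
  fix a b assume "a \<in> N" "b \<in> N"
  then have "(r, a) \<in> E\<^sup>*" "(r, b) \<in> E\<^sup>*"
    using assms by (auto simp: is_root_node_def)
  then have "(a, r) \<in> (E\<inverse>)\<^sup>*" "(r, b) \<in> E\<^sup>*"
    by (simp_all add: rtrancl_converseI)
  then have "(a, r) \<in> (E \<union> E\<inverse>)\<^sup>*" "(r, b) \<in> (E \<union> E\<inverse>)\<^sup>*"
    using rtrancl_mono[of "E\<inverse>" "E \<union> E\<inverse>"] rtrancl_mono[of E "E \<union> E\<inverse>"] by blast+
  then show "(a, b) \<in> (E \<union> E\<inverse>)\<^sup>*" by (rule rtrancl_trans)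
qed

lemma graph_like_subset: "graph_like N lab \<Longrightarrow> N' \<subseteq> N \<Longrightarrow> graph_like N' lab"
  unfolding graph_like_def by (rule inj_on_subset)

lemma tree_like_subgraph:
  assumes "tree_like N E" "N' \<subseteq> N" "E' \<subseteq> E"
  shows "tree_like N' E'"
proof -
  have "uadj E' a b \<Longrightarrow> uadj E a b" for a b
    using assms(3) unfolding uadj_def by blast
  then show ?thesis
    using assms unfolding tree_like_def by (meson order_trans subsetD)
qed

theorem mainTheorem1:
  fixes neg :: "'f \<Rightarrow> 'f" and tt ff uu :: 'f and Fd :: "'f set"
    and R :: "('f \<times> 'f set) set" and Bev :: "'f branch \<Rightarrow> 'f"
    and N :: "'n set" and E :: "('n \<times> 'n) set" and lab :: "'n \<Rightarrow> 'f" and n :: 'n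
  assumes "jframe neg tt ff uu Fd R"
    and "is_justification Fd R N E lab"
    and "locally_complete Fd N E lab"
    and "n \<in> N" and "internal E n"
  shows "(graph_like N lab \<longrightarrow>
           (\<exists>(N' :: 'n set) E' lab' n'. is_justification Fd R N' E' lab' \<and>
              locally_complete Fd N' E' lab' \<and> graph_like N' lab' \<and>
              connected_just N' E' \<and> is_root_node N' E' n' \<and> lab' n' = lab n \<and>
              (\<forall>I. is_interp neg tt ff uu I \<longrightarrow>
                    le_t (val Bev E lab n I) (val Bev E' lab' n' I))))
       \<and> (tree_like N E \<longrightarrow>
           (\<exists>(N' :: 'n set) E' lab' n'. is_justification Fd R N' E' lab' \<and>
              locally_complete Fd N' E' lab' \<and> tree_like N' E' \<and>
              connected_just N' E' \<and> is_root_node N' E' n' \<and> lab' n' = lab n \<and>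
              (\<forall>I. is_interp neg tt ff uu I \<longrightarrow>
                    le_t (val Bev E lab n I) (val Bev E' lab' n' I))))"
proof -
  let ?N' = "E\<^sup>* `` {n}" and ?E' = "reachable_edges E n"
  have sub: "?N' \<subseteq> N"
    using assms(2,4) by (simp add: is_justification_def rtrancl_closed_in_nodes)
  have root: "is_root_node ?N' ?E' n"
    by (rule is_root_node_reachable_edges)
  have common: "is_justification Fd R ?N' ?E' lab" "locally_complete Fd ?N' ?E' lab"
    "connected_just ?N' ?E'"
    using is_justification_reachable_edges[OF assms(2)]
      locally_complete_reachable_edges[OF assms(3) sub] connected_just_if_root_node[OF root]
    by auto
  have same_val: "le_t (val Bev E lab n I) (val Bev ?E' lab n I)" for I
    by (simp add: val_def branches_from_reachable_edges le_t_def)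
  show ?thesis
    using common root same_val graph_like_subset[OF _ sub]
      tree_like_subgraph[OF _ sub reachable_edges_subset]
    by blast
qed

end
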